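(* Let $Z$ be a random variable that is moment bounded with parameter $L>0$, let $k\ge1$ be an integer, $S\subseteq[k]$ a nonempty set, and $d_t$ a positive integer for each $t\in S$. Let $D=\sum_{t\in S}td_t$ and $d=\sum_{t\in S}d_t$. Then $$\left|\mathbb E\Big[\prod_{t\in S}(Z^t)^{d_t}\Big]\right|\le\min_{t\in S}\left\{\frac{L^{D-t}\,D!\,\mathbb E[|Z|^t]}{t!}\right\}$$ and $$\left|\mathbb E\Big[\prod_{t\in S}\big(Z^t-\mathbb E[Z^t]\big)^{d_t}\Big]\right|\le\min_{t\in S}\left\{\frac{2^dL^{D-t}\,D!\,\mathbb E[|Z|^t]}{t!}\right\}.$$
   Context: A random variable $Z$ is moment bounded with parameter $L>0$ if for every integer $i\ge1$, $\mathbb E[|Z|^i]\le iL\,\mathbb E[|Z|^{i-1}]$. *)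

theory Defs
  imports "HOL-Probability.Probability"
begin

text \<open>Expectations of the nonnegative variables
  |Z|^i are taken as (extended, nonnegative) Lebesgue integrals, so the
  definition makes sense without presupposing finiteness; finiteness of all
  absolute moments follows from it by induction (E[|Z|^0] = 1).\<close>

definition moment_bounded :: "'a measure \<Rightarrow> ('a \<Rightarrow> real) \<Rightarrow> real \<Rightarrow> bool" where
  "moment_bounded M Z L \<longleftrightarrow>
     (\<forall>i::nat. i \<ge> 1 \<longrightarrow>
        (\<integral>\<^sup>+ x. ennreal (\<bar>Z x\<bar> ^ i) \<partial>M)
          \<le> ennreal (real i * L) * (\<integral>\<^sup>+ x. ennreal (\<bar>Z x\<bar> ^ (i - 1)) \<partial>M))"

end

theory Submission
  imports Defs
begin

text \<open>Iterating the moment-boundedness condition from t up to D gives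
  E|Z|^D \<le> L^(D-t) D!/t! E|Z|^t, so it suffices to bound both expectations by E|Z|^D and
  2^d E|Z|^D respectively.  The uncentred product is Z^D.  For the centred one, bound each factor
  by |Z|^s + E|Z|^s, expand one factor at a time, and absorb products of absolute moments using
  E|Z|^a E|Z|^b \<le> E|Z|^(a+b), which holds because |Z|^a and |Z|^b are comonotone
  (Chebyshev's integral inequality); every factor costs a factor 2.\<close>

lemma (in prob_space) expectation_mult_ge_if_comonotone:
  fixes f g :: "'a \<Rightarrow> real"
  assumes f: "integrable M f" and g: "integrable M g" and fg: "integrable M (\<lambda>x. f x * g x)"
    and comonotone: "\<And>x y. x \<in> space M \<Longrightarrow> y \<in> space M \<Longrightarrow> 0 \<le> (f x - f y) * (g x - g y)"
  shows "expectation f * expectation g \<le> expectation (\<lambda>x. f x * g x)"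
proof -
  \<comment> \<open>Integrate \<open>(f x - f y) * (g x - g y) \<ge> 0\<close> first in \<open>y\<close>, then in \<open>x\<close>.\<close>
  have integral_in_y: "0 \<le> f x * g x - f x * expectation g - g x * expectation f + expectation (\<lambda>y. f y * g y)"
    if x: "x \<in> space M" for x
  proof -
    have "0 \<le> expectation (\<lambda>y. (f x - f y) * (g x - g y))"
      using comonotone[OF x] by (intro integral_nonneg_AE) auto
    also have "(\<lambda>y. (f x - f y) * (g x - g y)) = (\<lambda>y. (f x * g x + f y * g y) - (f x * g y + g x * f y))"
      by (auto simp: algebra_simps)
    finally show ?thesis
      using f g fg by (simp add: prob_space)
  qed
  have "0 \<le> expectation (\<lambda>x. f x * g x - f x * expectation g - g x * expectation f + expectation (\<lambda>y. f y * g y))"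
    using integral_in_y by (intro integral_nonneg_AE) auto
  also have "\<dots> = 2 * expectation (\<lambda>x. f x * g x) - 2 * expectation f * expectation g"
    using f g fg by (simp add: prob_space)
  finally show ?thesis by simp
qed

lemma prod_list_concat_replicate:
  "prod_list (map h (concat (map (\<lambda>t. replicate (d t) t) ts))) = prod_list (map (\<lambda>t. h t ^ d t) ts)"
  by (induction ts) (auto simp: prod_list_replicate)

lemma sum_list_concat_replicate:
  "sum_list (concat (map (\<lambda>t. replicate (d t) t) ts)) = sum_list (map (\<lambda>t. t * d t) ts)"
  by (induction ts) (auto simp: sum_list_replicate)

locale moment_bounded_rv = prob_space M for M :: "'a measure" +
  fixes Z :: "'a \<Rightarrow> real" and L :: real
  assumes Z_measurable[measurable]: "Z \<in> borel_measurable M"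
    and L_nonneg: "0 \<le> L"
    and moment_bounded: "moment_bounded M Z L"
begin

abbreviation abs_moment :: "nat \<Rightarrow> real" where
  "abs_moment i \<equiv> expectation (\<lambda>x. \<bar>Z x\<bar> ^ i)"

lemma nn_integral_abs_power_Suc_le:
  "(\<integral>\<^sup>+ x. ennreal (\<bar>Z x\<bar> ^ Suc i) \<partial>M) \<le> ennreal (real (Suc i) * L) * (\<integral>\<^sup>+ x. ennreal (\<bar>Z x\<bar> ^ i) \<partial>M)"
  using moment_bounded unfolding moment_bounded_def by (metis diff_Suc_1 le_add1 plus_1_eq_Suc)

lemma integrable_abs_power: "integrable M (\<lambda>x. \<bar>Z x\<bar> ^ i)"
proof (rule integrableI_nonneg)
  show "(\<integral>\<^sup>+ x. ennreal (\<bar>Z x\<bar> ^ i) \<partial>M) < \<infinity>"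
  proof (induction i)
    case 0
    then show ?case by (simp add: emeasure_space_1)
  next
    case (Suc i)
    then show ?case
      using nn_integral_abs_power_Suc_le[of i] by (simp add: ennreal_mult_less_top order.strict_trans1)
  qed
qed auto

lemma abs_moment_nonneg: "0 \<le> abs_moment i"
  by (rule integral_nonneg_AE) auto

lemma abs_expectation_power_le: "\<bar>expectation (\<lambda>x. Z x ^ i)\<bar> \<le> abs_moment i"
  using integral_abs_bound[of M "\<lambda>x. Z x ^ i"] by (simp add: power_abs)

lemma abs_moment_Suc_le: "abs_moment (Suc i) \<le> real (Suc i) * L * abs_moment i"
proof -
  have nn_integral_eq: "(\<integral>\<^sup>+ x. ennreal (\<bar>Z x\<bar> ^ j) \<partial>M) = ennreal (abs_moment j)" for j
    by (rule nn_integral_eq_integral[OF integrable_abs_power]) auto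
  have "ennreal (abs_moment (Suc i)) \<le> ennreal (real (Suc i) * L) * ennreal (abs_moment i)"
    using nn_integral_abs_power_Suc_le[of i] unfolding nn_integral_eq .
  also have "\<dots> = ennreal (real (Suc i) * L * abs_moment i)"
    using L_nonneg abs_moment_nonneg[of i] by (simp add: ennreal_mult)
  finally show ?thesis
    using L_nonneg abs_moment_nonneg[of i] by (subst (asm) ennreal_le_iff) auto
qed

lemma abs_moment_le_fact:
  assumes "t \<le> n"
  shows "abs_moment n \<le> L ^ (n - t) * fact n / fact t * abs_moment t"
  using assms
proof (induction n rule: dec_induct)
  case base
  then show ?case by simp
next
  case (step n)
  have "abs_moment (Suc n) \<le> real (Suc n) * L * abs_moment n"
    by (rule abs_moment_Suc_le)
  also have "\<dots> \<le> real (Suc n) * L * (L ^ (n - t) * fact n / fact t * abs_moment t)"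
    using step.IH L_nonneg by (intro mult_left_mono) auto
  also have "\<dots> = L ^ (Suc n - t) * fact (Suc n) / fact t * abs_moment t"
    using step.hyps by (simp add: Suc_diff_le algebra_simps)
  finally show ?case .
qed

lemma abs_moment_mult_le: "abs_moment a * abs_moment b \<le> abs_moment (a + b)"
proof -
  have comonotone: "0 \<le> (\<bar>Z x\<bar> ^ a - \<bar>Z y\<bar> ^ a) * (\<bar>Z x\<bar> ^ b - \<bar>Z y\<bar> ^ b)" for x y
  proof (cases "\<bar>Z x\<bar> \<le> \<bar>Z y\<bar>")
    case True
    then show ?thesis by (intro mult_nonpos_nonpos) (auto intro: power_mono)
  next
    case False
    then show ?thesis by (intro mult_nonneg_nonneg) (auto intro: power_mono)
  qed
  have "integrable M (\<lambda>x. \<bar>Z x\<bar> ^ a * \<bar>Z x\<bar> ^ b)"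
    using integrable_abs_power[of "a + b"] by (simp add: power_add)
  from expectation_mult_ge_if_comonotone[OF integrable_abs_power integrable_abs_power this comonotone]
  show ?thesis by (simp only: power_add)
qed

lemma integrable_abs_power_mult_prod_list:
  "integrable M (\<lambda>x. \<bar>Z x\<bar> ^ a * (\<Prod>s\<leftarrow>xs. \<bar>Z x\<bar> ^ s + abs_moment s))"
proof (induction xs arbitrary: a)
  case Nil
  then show ?case using integrable_abs_power[of a] by simp
next
  case (Cons s xs)
  have "(\<lambda>x. \<bar>Z x\<bar> ^ a * (\<Prod>s\<leftarrow>s # xs. \<bar>Z x\<bar> ^ s + abs_moment s))
      = (\<lambda>x. \<bar>Z x\<bar> ^ (a + s) * (\<Prod>s\<leftarrow>xs. \<bar>Z x\<bar> ^ s + abs_moment s)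
             + abs_moment s * (\<bar>Z x\<bar> ^ a * (\<Prod>s\<leftarrow>xs. \<bar>Z x\<bar> ^ s + abs_moment s)))"
    by (simp add: power_add algebra_simps)
  then show ?case
    using Cons.IH by (simp only:) (intro Bochner_Integration.integrable_add integrable_mult_right)
qed

lemma expectation_abs_power_mult_prod_list_le:
  "expectation (\<lambda>x. \<bar>Z x\<bar> ^ a * (\<Prod>s\<leftarrow>xs. \<bar>Z x\<bar> ^ s + abs_moment s))
     \<le> 2 ^ length xs * abs_moment (a + sum_list xs)"
proof (induction xs arbitrary: a)
  case Nil
  then show ?case by simp
next
  case (Cons s xs)
  define P where "P x = (\<Prod>s\<leftarrow>xs. \<bar>Z x\<bar> ^ s + abs_moment s)" for x
  have "expectation (\<lambda>x. \<bar>Z x\<bar> ^ a * (\<Prod>s\<leftarrow>s # xs. \<bar>Z x\<bar> ^ s + abs_moment s))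
      = expectation (\<lambda>x. \<bar>Z x\<bar> ^ (a + s) * P x + abs_moment s * (\<bar>Z x\<bar> ^ a * P x))"
    by (simp add: P_def power_add algebra_simps)
  also have "\<dots> = expectation (\<lambda>x. \<bar>Z x\<bar> ^ (a + s) * P x) + abs_moment s * expectation (\<lambda>x. \<bar>Z x\<bar> ^ a * P x)"
    using integrable_abs_power_mult_prod_list unfolding P_def
    by (simp add: Bochner_Integration.integral_add integrable_mult_right)
  also have "\<dots> \<le> 2 ^ length xs * abs_moment (a + s + sum_list xs)
                  + abs_moment s * (2 ^ length xs * abs_moment (a + sum_list xs))"
    using Cons.IH abs_moment_nonneg unfolding P_def by (intro add_mono mult_left_mono) auto
  also have "abs_moment s * (2 ^ length xs * abs_moment (a + sum_list xs))
      \<le> 2 ^ length xs * abs_moment (s + (a + sum_list xs))"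
    using abs_moment_mult_le[of s "a + sum_list xs"] by (simp add: mult.left_commute)
  finally show ?case
    by (simp add: algebra_simps)
qed

lemma abs_centred_power_le: "\<bar>Z x ^ s - expectation (\<lambda>y. Z y ^ s)\<bar> \<le> \<bar>Z x\<bar> ^ s + abs_moment s"
  using abs_triangle_ineq4[of "Z x ^ s" "expectation (\<lambda>y. Z y ^ s)"] abs_expectation_power_le[of s]
  by (simp add: power_abs)

lemma abs_prod_list_centred_power_le:
  "\<bar>\<Prod>s\<leftarrow>xs. Z x ^ s - expectation (\<lambda>y. Z y ^ s)\<bar> \<le> (\<Prod>s\<leftarrow>xs. \<bar>Z x\<bar> ^ s + abs_moment s)"
  by (induction xs) (auto simp: abs_mult intro!: mult_mono abs_centred_power_le order_trans[OF abs_ge_zero])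

lemma abs_expectation_prod_list_centred_le:
  "\<bar>expectation (\<lambda>x. \<Prod>s\<leftarrow>xs. Z x ^ s - expectation (\<lambda>y. Z y ^ s))\<bar> \<le> 2 ^ length xs * abs_moment (sum_list xs)"
proof -
  have "\<bar>expectation (\<lambda>x. \<Prod>s\<leftarrow>xs. Z x ^ s - expectation (\<lambda>y. Z y ^ s))\<bar>
      \<le> expectation (\<lambda>x. \<bar>\<Prod>s\<leftarrow>xs. Z x ^ s - expectation (\<lambda>y. Z y ^ s)\<bar>)"
    by (rule integral_abs_bound)
  also have "\<dots> \<le> expectation (\<lambda>x. \<Prod>s\<leftarrow>xs. \<bar>Z x\<bar> ^ s + abs_moment s)"
    using integrable_abs_power_mult_prod_list[of 0 xs]
    by (intro integral_mono_AE') (auto intro: abs_prod_list_centred_power_le order_trans[OF abs_ge_zero])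
  also have "\<dots> \<le> 2 ^ length xs * abs_moment (sum_list xs)"
    using expectation_abs_power_mult_prod_list_le[of 0 xs] by simp
  finally show ?thesis .
qed

lemma abs_expectation_prod_power_le:
  "\<bar>expectation (\<lambda>x. \<Prod>t\<in>S. (Z x ^ t) ^ d t)\<bar> \<le> abs_moment (\<Sum>t\<in>S. t * d t)"
proof -
  have "(\<lambda>x. \<Prod>t\<in>S. (Z x ^ t) ^ d t) = (\<lambda>x. Z x ^ (\<Sum>t\<in>S. t * d t))"
    by (simp add: power_mult[symmetric] power_sum)
  then show ?thesis
    using abs_expectation_power_le by simp
qed

lemma abs_expectation_prod_centred_power_le:
  assumes "finite S"
  shows "\<bar>expectation (\<lambda>x. \<Prod>t\<in>S. (Z x ^ t - expectation (\<lambda>y. Z y ^ t)) ^ d t)\<bar>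
           \<le> 2 ^ (\<Sum>t\<in>S. d t) * abs_moment (\<Sum>t\<in>S. t * d t)"
proof -
  define xs where "xs = concat (map (\<lambda>t. replicate (d t) t) (sorted_list_of_set S))"
  have "length xs = (\<Sum>t\<in>S. d t)"
    using assms by (simp add: xs_def length_concat comp_def sum_list_distinct_conv_sum_set)
  moreover have "sum_list xs = (\<Sum>t\<in>S. t * d t)"
    using assms by (simp add: xs_def sum_list_concat_replicate sum_list_distinct_conv_sum_set)
  moreover have "(\<Prod>s\<leftarrow>xs. h s) = (\<Prod>t\<in>S. h t ^ d t)" for h :: "nat \<Rightarrow> real"
    using assms by (simp add: xs_def prod_list_concat_replicate prod.distinct_set_conv_list[symmetric])
  ultimately show ?thesis
    using abs_expectation_prod_list_centred_le[of xs] by simp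
qed

end

theorem lemma3:
  fixes M :: "'a measure" and Z :: "'a \<Rightarrow> real" and L :: real
    and k :: nat and S :: "nat set" and d :: "nat \<Rightarrow> nat"
  assumes "prob_space M"
    and "Z \<in> borel_measurable M"
    and "L > 0"
    and "moment_bounded M Z L"
    and "k \<ge> 1"
    and "S \<subseteq> {1..k}" and "S \<noteq> {}"
    and "\<And>t. t \<in> S \<Longrightarrow> d t > 0"
  defines "D \<equiv> (\<Sum>t\<in>S. t * d t)"
    and "dd \<equiv> (\<Sum>t\<in>S. d t)"
  shows "\<bar>prob_space.expectation M (\<lambda>x. \<Prod>t\<in>S. (Z x ^ t) ^ d t)\<bar>
           \<le> Min ((\<lambda>t. L ^ (D - t) * fact D * prob_space.expectation M (\<lambda>x. \<bar>Z x\<bar> ^ t) / fact t) ` S)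
       \<and> \<bar>prob_space.expectation M
            (\<lambda>x. \<Prod>t\<in>S. (Z x ^ t - prob_space.expectation M (\<lambda>y. Z y ^ t)) ^ d t)\<bar>
           \<le> Min ((\<lambda>t. 2 ^ dd * L ^ (D - t) * fact D * prob_space.expectation M (\<lambda>x. \<bar>Z x\<bar> ^ t) / fact t) ` S)"
proof -
  interpret moment_bounded_rv M Z L
    using assms(1-4) by (simp add: moment_bounded_rv_def moment_bounded_rv_axioms_def)
  have "finite S"
    using assms(6) finite_subset by blast
  have moment_chain: "abs_moment D \<le> L ^ (D - t) * fact D * abs_moment t / fact t" if "t \<in> S" for t
  proof -
    have "t \<le> t * d t" using assms(8)[OF that] by simp
    also have "\<dots> \<le> D" unfolding D_def using \<open>finite S\<close> that by (intro member_le_sum) auto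
    finally show ?thesis
      using abs_moment_le_fact[of t D] by simp
  qed
  have "2 ^ dd * abs_moment D \<le> 2 ^ dd * L ^ (D - t) * fact D * abs_moment t / fact t" if "t \<in> S" for t
    using mult_left_mono[OF moment_chain[OF that], of "2 ^ dd"] by (simp add: mult.assoc)
  then show ?thesis
    using \<open>finite S\<close> assms(7) moment_chain abs_expectation_prod_power_le[where S = S and d = d]
      abs_expectation_prod_centred_power_le[OF \<open>finite S\<close>, of d]
    unfolding D_def[symmetric] dd_def[symmetric] by (auto simp: Min_ge_iff intro: order_trans)
qed

end
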